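(* Let $G$ be a finitely generated group of exponential growth with finite generating set $A$, $S=A\cup A^{-1}$, and let $\psi:L\to G$ be an arbitrary bijection from a language $L\subseteq S^*$ onto $G$. Then there is a constant $\lambda_1>0$ such that, with $B_n=\{g\in G: d_A(g)\le n\}$ and $Q'_n=\{g\in B_n: \lambda_1 d_A(g)\le|\psi^{-1}(g)|\}$, one has $\lim_{n\to\infty}\#Q'_n/\#B_n=1$, and for every $g\in Q'_n$, writing $w=\psi^{-1}(g)$, $d_A(\pi(w),\psi(w))\le(1+1/\lambda_1)|w|$.
   Context: $\pi:S^*\to G$ is the evaluation map and $d_A$ the word metric of $\Gamma(G,A)$, $d_A(g)=d_A(e,g)$. Exponential growth means there is $\lambda>1$ with $\#B_n\ge\lambda^n$ for all large $n$. *)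

theory Defs
  imports "HOL-Analysis.Analysis" "HOL-Algebra.Algebra"
begin

definition sym_gens :: "('a, 'b) monoid_scheme \<Rightarrow> 'a set \<Rightarrow> 'a set" where
  "sym_gens G A = A \<union> (\<lambda>a. inv\<^bsub>G\<^esub> a) ` A"

definition eval_word :: "('a, 'b) monoid_scheme \<Rightarrow> 'a list \<Rightarrow> 'a" where
  "eval_word G w = foldr (\<lambda>x y. x \<otimes>\<^bsub>G\<^esub> y) w \<one>\<^bsub>G\<^esub>"

definition word_length :: "('a, 'b) monoid_scheme \<Rightarrow> 'a set \<Rightarrow> 'a \<Rightarrow> nat" where
  "word_length G A g = (LEAST n. \<exists>w \<in> lists (sym_gens G A). length w = n \<and> eval_word G w = g)"

definition word_dist :: "('a, 'b) monoid_scheme \<Rightarrow> 'a set \<Rightarrow> 'a \<Rightarrow> 'a \<Rightarrow> nat" where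
  "word_dist G A g h = word_length G A (inv\<^bsub>G\<^esub> g \<otimes>\<^bsub>G\<^esub> h)"

definition word_ball :: "('a, 'b) monoid_scheme \<Rightarrow> 'a set \<Rightarrow> nat \<Rightarrow> 'a set" where
  "word_ball G A n = {g \<in> carrier G. word_length G A g \<le> n}"

definition exponential_growth :: "('a, 'b) monoid_scheme \<Rightarrow> 'a set \<Rightarrow> bool" where
  "exponential_growth G A \<longleftrightarrow>
     (\<exists>c::real. c > 1 \<and> (\<forall>\<^sub>F n in sequentially. real (card (word_ball G A n)) \<ge> c ^ n))"

end

theory Submission
  imports Defs
begin

(* There are at most (#S+1)^m words of length at most m, so the elements g with
   |psi^-1(g)| < lam*n number at most (#S+2)^(lam*n).  Choosing lam so small that this is
   (sqrt c)^n, where #B_n >= c^n, these exceptional elements have vanishing density in B_n.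
   For the remaining g = psi(w) the triangle inequality gives
   d(pi(w), g) <= |w| + d(g) <= |w| + |w|/lam. *)

lemma sum_power_le_Suc_power: "(\<Sum>i\<le>m. (s::nat) ^ i) \<le> (s + 1) ^ m"
proof (induction m)
  case 0
  then show ?case by simp
next
  case (Suc m)
  have "(\<Sum>i\<le>Suc m. s ^ i) = (\<Sum>i\<le>m. s ^ i) + s * s ^ m" by simp
  also have "\<dots> \<le> (s + 1) ^ m + s * (s + 1) ^ m"
    using Suc by (intro add_mono mult_left_mono power_mono) auto
  finally show ?case by simp
qed

lemma card_lists_length_le_bound:
  assumes "finite S"
  shows "card {w. set w \<subseteq> S \<and> length w \<le> m} \<le> (card S + 1) ^ m"
  using card_lists_length_le[OF assms] sum_power_le_Suc_power by simp

lemma card_le_of_short_preimages: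
  assumes "finite S" and "L \<subseteq> lists S" and "bij_betw \<psi> L U"
    and "V \<subseteq> U" and "\<And>x. x \<in> V \<Longrightarrow> length (the_inv_into L \<psi> x) \<le> m"
  shows "card V \<le> (card S + 1) ^ m"
proof -
  have finite_short: "finite {w \<in> L. length w \<le> m}"
    using assms(2) by (intro finite_subset[OF _ finite_lists_length_le[OF assms(1)]]) auto
  have "V \<subseteq> \<psi> ` {w \<in> L. length w \<le> m}"
    using assms(3-5) by (force simp: bij_betw_def f_the_inv_into_f the_inv_into_into)
  then have "card V \<le> card (\<psi> ` {w \<in> L. length w \<le> m})"
    using finite_short by (intro card_mono) auto
  also have "\<dots> \<le> card {w \<in> L. length w \<le> m}"
    using finite_short by (rule card_image_le)
  also have "\<dots> \<le> card {w. set w \<subseteq> S \<and> length w \<le> m}"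
    using assms(2) by (intro card_mono finite_lists_length_le[OF assms(1)]) auto
  also have "\<dots> \<le> (card S + 1) ^ m"
    by (rule card_lists_length_le_bound[OF assms(1)])
  finally show ?thesis .
qed

lemma power_floor_le_powr:
  fixes K x :: real
  assumes "1 \<le> K" and "0 \<le> x"
  shows "K ^ nat \<lfloor>x\<rfloor> \<le> K powr x"
proof -
  have "K ^ nat \<lfloor>x\<rfloor> = K powr real (nat \<lfloor>x\<rfloor>)"
    using assms(1) by (simp add: powr_realpow)
  also have "\<dots> \<le> K powr x"
    using assms by (intro powr_mono) auto
  finally show ?thesis .
qed

lemma exists_powr_less:
  fixes c K :: real
  assumes "1 < c" and "1 < K"
  shows "\<exists>lam > 0. K powr lam < c"
proof (intro exI conjI)
  show "ln c / (2 * ln K) > 0"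
    using assms by simp
  have "K powr (ln c / (2 * ln K)) = exp (ln c / 2)"
    using assms(2) by (simp add: powr_def)
  also have "\<dots> < exp (ln c)"
    using assms(1) by (intro exp_less_mono) simp
  finally show "K powr (ln c / (2 * ln K)) < c"
    using assms(1) by simp
qed

lemma card_ratio_tendsto_1:
  fixes B Q :: "nat \<Rightarrow> 'a set" and r c :: real
  assumes sub: "\<And>n. Q n \<subseteq> B n"
    and small: "\<And>n. real (card (B n - Q n)) \<le> r ^ n"
    and large: "\<forall>\<^sub>F n in sequentially. c ^ n \<le> real (card (B n))"
    and "0 \<le> r" and "r < c"
  shows "(\<lambda>n. real (card (Q n)) / real (card (B n))) \<longlonglongrightarrow> 1"
proof (rule tendsto_sandwich)
  have "(\<lambda>n. (r / c) ^ n) \<longlonglongrightarrow> 0"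
    using assms(4,5) by (intro LIMSEQ_power_zero) auto
  then show "(\<lambda>n. 1 - (r / c) ^ n) \<longlonglongrightarrow> 1"
    using tendsto_diff[OF tendsto_const, of _ 0 sequentially 1] by simp
  show "(\<lambda>n. 1) \<longlonglongrightarrow> (1::real)" by simp
  show "\<forall>\<^sub>F n in sequentially. 1 - (r / c) ^ n \<le> real (card (Q n)) / real (card (B n))"
    using large
  proof eventually_elim
    case (elim n)
    have "c ^ n > 0"
      using assms(4,5) by simp
    with elim have B_pos: "real (card (B n)) > 0"
      by linarith
    then have "finite (B n)" by (simp add: card_gt_0_iff)
    then have "real (card (Q n)) = real (card (B n)) - real (card (B n - Q n))"
      using sub card_Diff_subset[of "Q n" "B n"] card_mono[of "B n" "Q n"]
      by (simp add: finite_subset of_nat_diff)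
    moreover have "real (card (B n - Q n)) / real (card (B n)) \<le> r ^ n / c ^ n"
      using small[of n] elim assms(4,5) B_pos by (intro frac_le) auto
    ultimately show ?case
      using B_pos by (simp add: power_divide diff_divide_distrib)
  qed
  show "\<forall>\<^sub>F n in sequentially. real (card (Q n)) / real (card (B n)) \<le> 1"
  proof (intro always_eventually allI)
    fix n
    show "real (card (Q n)) / real (card (B n)) \<le> 1"
    proof (cases "finite (B n)")
      case True
      then show ?thesis using card_mono[OF True sub] by (simp add: divide_le_eq_1 card_gt_0_iff)
    qed simp
  qed
qed

context group
begin

lemma eval_word_closed: "set w \<subseteq> carrier G \<Longrightarrow> eval_word G w \<in> carrier G"
  by (induction w) (auto simp: eval_word_def)

lemma eval_word_Cons: "eval_word G (a # w) = a \<otimes> eval_word G w"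
  by (simp add: eval_word_def)

lemma eval_word_append:
  assumes "set u \<subseteq> carrier G" and "set v \<subseteq> carrier G"
  shows "eval_word G (u @ v) = eval_word G u \<otimes> eval_word G v"
  using assms(1)
proof (induction u)
  case Nil
  then show ?case using eval_word_closed[OF assms(2)] by (simp add: eval_word_def)
next
  case (Cons a u)
  then show ?case
    using eval_word_closed[of u] eval_word_closed[OF assms(2)] by (simp add: eval_word_Cons m_assoc)
qed

lemma sym_gens_closed: "A \<subseteq> carrier G \<Longrightarrow> sym_gens G A \<subseteq> carrier G"
  unfolding sym_gens_def by auto

lemma inv_in_sym_gens: "A \<subseteq> carrier G \<Longrightarrow> a \<in> sym_gens G A \<Longrightarrow> inv a \<in> sym_gens G A"
  unfolding sym_gens_def by (auto simp: subset_iff)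

lemma generate_imp_eval_word:
  assumes "A \<subseteq> carrier G" and "x \<in> generate G A"
  shows "\<exists>w \<in> lists (sym_gens G A). eval_word G w = x"
  using assms(2)
proof (induction rule: generate.induct)
  case one
  show ?case by (intro bexI[of _ "[]"]) (auto simp: eval_word_def)
next
  case (incl h)
  then show ?case using assms(1)
    by (intro bexI[of _ "[h]"]) (auto simp: eval_word_def sym_gens_def)
next
  case (inv h)
  then show ?case using assms(1)
    by (intro bexI[of _ "[inv h]"]) (auto simp: eval_word_def sym_gens_def)
next
  case (eng h1 h2)
  then obtain u v where "u \<in> lists (sym_gens G A)" "eval_word G u = h1"
    and "v \<in> lists (sym_gens G A)" "eval_word G v = h2" by blast
  moreover have "set u \<subseteq> carrier G" "set v \<subseteq> carrier G"
    using calculation sym_gens_closed[OF assms(1)] by auto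
  ultimately show ?case by (intro bexI[of _ "u @ v"]) (auto simp: eval_word_append)
qed

lemma inverse_eval_word:
  assumes "A \<subseteq> carrier G" and "w \<in> lists (sym_gens G A)"
  shows "\<exists>v \<in> lists (sym_gens G A). length v = length w \<and> eval_word G v = inv (eval_word G w)"
  using assms(2)
proof (induction w)
  case Nil
  show ?case by (intro bexI[of _ "[]"]) (auto simp: eval_word_def)
next
  case (Cons a w)
  then obtain v where v: "v \<in> lists (sym_gens G A)" "length v = length w"
    "eval_word G v = inv (eval_word G w)" by auto
  from Cons have aw: "a \<in> sym_gens G A" "w \<in> lists (sym_gens G A)" by simp_all
  then have a: "a \<in> carrier G" "inv a \<in> sym_gens G A"
    using sym_gens_closed[OF assms(1)] inv_in_sym_gens[OF assms(1)] by auto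
  have w: "set w \<subseteq> carrier G" "set v \<subseteq> carrier G"
    using aw(2) v(1) sym_gens_closed[OF assms(1)] by auto
  have "eval_word G (v @ [inv a]) = eval_word G v \<otimes> eval_word G [inv a]"
    using w a by (intro eval_word_append) auto
  also have "\<dots> = inv (eval_word G w) \<otimes> inv a"
    using a v(3) by (simp add: eval_word_def)
  also have "\<dots> = inv (eval_word G (a # w))"
    using a eval_word_closed[OF w(1)] by (simp add: eval_word_Cons inv_mult_group)
  finally show ?case using v a by (intro bexI[of _ "v @ [inv a]"]) auto
qed

lemma word_length_le_length:
  "w \<in> lists (sym_gens G A) \<Longrightarrow> word_length G A (eval_word G w) \<le> length w"
  unfolding word_length_def by (rule Least_le) auto

lemma word_length_attained:
  assumes "A \<subseteq> carrier G" and "generate G A = carrier G" and "g \<in> carrier G"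
  shows "\<exists>w \<in> lists (sym_gens G A). length w = word_length G A g \<and> eval_word G w = g"
proof -
  have "\<exists>n. \<exists>w \<in> lists (sym_gens G A). length w = n \<and> eval_word G w = g"
    using generate_imp_eval_word[OF assms(1)] assms(2,3) by blast
  from LeastI_ex[OF this] show ?thesis unfolding word_length_def .
qed

lemma word_length_mult_le:
  assumes "A \<subseteq> carrier G" and "generate G A = carrier G"
    and "x \<in> carrier G" and "y \<in> carrier G"
  shows "word_length G A (x \<otimes> y) \<le> word_length G A x + word_length G A y"
proof -
  obtain u v where u: "u \<in> lists (sym_gens G A)" "length u = word_length G A x" "eval_word G u = x"
    and v: "v \<in> lists (sym_gens G A)" "length v = word_length G A y" "eval_word G v = y"
    using word_length_attained[OF assms(1,2)] assms(3,4) by meson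
  have "set u \<subseteq> carrier G" "set v \<subseteq> carrier G"
    using u(1) v(1) sym_gens_closed[OF assms(1)] by auto
  then have "x \<otimes> y = eval_word G (u @ v)"
    using u(3) v(3) by (simp add: eval_word_append)
  then show ?thesis
    using word_length_le_length[of "u @ v"] u v by simp
qed

lemma word_dist_eval_word_le:
  assumes "A \<subseteq> carrier G" and "generate G A = carrier G"
    and "w \<in> lists (sym_gens G A)" and "g \<in> carrier G"
  shows "word_dist G A (eval_word G w) g \<le> length w + word_length G A g"
proof -
  have w: "eval_word G w \<in> carrier G"
    using assms(3) sym_gens_closed[OF assms(1)] by (intro eval_word_closed) auto
  obtain v where v: "v \<in> lists (sym_gens G A)" "length v = length w"
    "eval_word G v = inv (eval_word G w)"
    using inverse_eval_word[OF assms(1,3)] by blast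
  have "word_dist G A (eval_word G w) g
        \<le> word_length G A (inv (eval_word G w)) + word_length G A g"
    unfolding word_dist_def using w assms(4) by (intro word_length_mult_le[OF assms(1,2)]) auto
  also have "word_length G A (inv (eval_word G w)) \<le> length w"
    using word_length_le_length[OF v(1)] v(2,3) by simp
  finally show ?thesis by simp
qed

lemma word_dist_eval_word_le_scaled:
  assumes "A \<subseteq> carrier G" and "generate G A = carrier G"
    and "w \<in> lists (sym_gens G A)" and "g \<in> carrier G"
    and "lam > 0" and "lam * real (word_length G A g) \<le> real (length w)"
  shows "real (word_dist G A (eval_word G w) g) \<le> (1 + 1 / lam) * real (length w)"
proof -
  have "real (word_dist G A (eval_word G w) g) \<le> real (length w) + real (word_length G A g)"
    using word_dist_eval_word_le[OF assms(1-4)] by linarith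
  also have "real (word_length G A g) \<le> real (length w) / lam"
    using assms(5,6) by (simp add: field_simps mult.commute)
  finally show ?thesis
    using assms(5) by (simp add: field_simps)
qed

end

lemma card_ball_short_preimages_le:
  assumes "finite (sym_gens G A)" and "L \<subseteq> lists (sym_gens G A)" and "bij_betw \<psi> L (carrier G)"
    and "lam \<ge> 0" and "real (card (sym_gens G A)) + 1 \<le> K"
  shows "real (card {g \<in> word_ball G A n.
           real (length (the_inv_into L \<psi> g)) < lam * real (word_length G A g)})
         \<le> (K powr lam) ^ n"
    (is "real (card ?E) \<le> _")
proof -
  define m where "m = nat \<lfloor>lam * real n\<rfloor>"
  have "length (the_inv_into L \<psi> g) \<le> m" if "g \<in> ?E" for g
  proof -
    have "lam * real (word_length G A g) \<le> lam * real n"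
      using that assms(4) by (intro mult_left_mono) (auto simp: word_ball_def)
    with that have "real (length (the_inv_into L \<psi> g)) < lam * real n" by auto
    then show ?thesis unfolding m_def by linarith
  qed
  then have "card ?E \<le> (card (sym_gens G A) + 1) ^ m"
    by (intro card_le_of_short_preimages[OF assms(1-3)]) (auto simp: word_ball_def)
  then have "real (card ?E) \<le> (real (card (sym_gens G A)) + 1) ^ m"
    by (metis of_nat_1 of_nat_add of_nat_le_iff of_nat_power)
  also have "\<dots> \<le> K ^ m"
    using assms(5) by (intro power_mono) auto
  also have "\<dots> \<le> K powr (lam * real n)"
    unfolding m_def using assms(4,5) by (intro power_floor_le_powr) auto
  also have "\<dots> = (K powr lam) ^ n"
    using assms(5) by (simp add: powr_powr[symmetric] powr_realpow[symmetric] mult.commute)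
  finally show ?thesis .
qed

theorem mainTheorem14:
  fixes G :: "('a, 'b) monoid_scheme" and A :: "'a set"
    and L :: "'a list set" and \<psi> :: "'a list \<Rightarrow> 'a"
  assumes "group G"
    and "finite A" and "A \<subseteq> carrier G" and "generate G A = carrier G"
    and "exponential_growth G A"
    and "L \<subseteq> lists (sym_gens G A)"
    and "bij_betw \<psi> L (carrier G)"
  shows "\<exists>lam1::real. lam1 > 0 \<and>
     (let Q' = (\<lambda>n. {g \<in> word_ball G A n.
                 lam1 * real (word_length G A g) \<le> real (length (the_inv_into L \<psi> g))})
      in ((\<lambda>n. real (card (Q' n)) / real (card (word_ball G A n))) \<longlonglongrightarrow> 1) \<and>
         (\<forall>n. \<forall>g \<in> Q' n. let w = the_inv_into L \<psi> g in
             real (word_dist G A (eval_word G w) (\<psi> w)) \<le> (1 + 1 / lam1) * real (length w)))"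
proof -
  interpret group G by fact
  obtain c :: real where "c > 1"
    and large: "\<forall>\<^sub>F n in sequentially. c ^ n \<le> real (card (word_ball G A n))"
    using assms(5) unfolding exponential_growth_def by auto
  define K where "K = real (card (sym_gens G A)) + 2"
  obtain lam where lam: "lam > 0" "K powr lam < c"
    using exists_powr_less[OF \<open>c > 1\<close>, of K] unfolding K_def by auto
  define Q where "Q n = {g \<in> word_ball G A n.
    lam * real (word_length G A g) \<le> real (length (the_inv_into L \<psi> g))}" for n
  have "finite (sym_gens G A)"
    using assms(2) by (simp add: sym_gens_def)
  moreover have "word_ball G A n - Q n = {g \<in> word_ball G A n.
      real (length (the_inv_into L \<psi> g)) < lam * real (word_length G A g)}" for n
    unfolding Q_def by auto
  ultimately have "real (card (word_ball G A n - Q n)) \<le> (K powr lam) ^ n" for n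
    using card_ball_short_preimages_le[OF _ assms(6,7), of lam K n] lam(1) by (simp add: K_def)
  then have "(\<lambda>n. real (card (Q n)) / real (card (word_ball G A n))) \<longlonglongrightarrow> 1"
    by (intro card_ratio_tendsto_1[OF _ _ large _ lam(2)]) (auto simp: Q_def)
  moreover have "real (word_dist G A (eval_word G w) (\<psi> w)) \<le> (1 + 1 / lam) * real (length w)"
    if "g \<in> Q n" and "w = the_inv_into L \<psi> g" for n g w
  proof -
    have "g \<in> carrier G" using that(1) by (simp add: Q_def word_ball_def)
    then have "w \<in> L" and "\<psi> w = g"
      using assms(7) that(2) by (auto simp: bij_betw_def the_inv_into_into f_the_inv_into_f)
    then show ?thesis
      using that assms(3,4,6) lam(1) \<open>g \<in> carrier G\<close>
      by (intro word_dist_eval_word_le_scaled) (auto simp: Q_def)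
  qed
  ultimately show ?thesis
    using lam(1) unfolding Q_def Let_def by blast
qed

end
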